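(* Let $f,g_1,\dots,g_m,h_1,\dots,h_l\in\mathbb{R}[\mathbf{x}]$ with correlative sparsity data $(I_j,J_j,W_j)_{j\in[p]}$ as in the context. Assume that for every $j\in[p]$ there is $R_j>0$ such that $R_j-\|\mathbf{x}(I_j)\|_2^2\in\{g_1,\dots,g_m\}$. Then $(0,\infty)\subseteq Q_k^\circ(g_{J_j})$ for all integers $k\ge k_{\min}$ and all $j\in[p]$. As a consequence, the POP of minimizing $f$ over $S(g)\cap V(h)$ has the constant trace property with correlative sparsity.
   Context: $\mathbf{x}=(x_1,\dots,x_n)$; for $I\subseteq[n]$, $\mathbf{x}(I)=(x_i)_{i\in I}$. $\lceil p\rceil:=\lceil\deg(p)/2\rceil$; $k_{\min}:=\max\{\lceil f\rceil,\lceil g_i\rceil,\lceil h_j\rceil\}$; $S(g)=\{\mathbf{x}:g_i(\mathbf{x})\ge0\}$, $V(h)=\{\mathbf{x}:h_j(\mathbf{x})=0\}$. Sparsity data: $I_1,\dots,I_p\subseteq[n]$ (in the paper, the maximal cliques of a chordal extension of the correlative sparsity pattern graph), $n_j:=|I_j|$; $\{J_j\}_{j\in[p]}$ a partition of $[m]$ and $\{W_j\}_{j\in[p]}$ a partition of $[l]$ such that $g_i\in\mathbb{R}[\mathbf{x}(I_j)]$ for $i\in J_j$ and $h_i\in\mathbb{R}[\mathbf{x}(I_j)]$ for $i\in W_j$; $g_{J_j}:=\{g_i:i\in J_j\}$. $\mathbb{N}^I_d:=\{\alpha\in\mathbb{N}^n:|\alpha|\le d,\ \mathrm{supp}(\alpha)\subseteq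 I\}$, $\mathbf{v}^I_d:=(\mathbf{x}^\alpha)_{\alpha\in\mathbb{N}^I_d}$, of length $s(d,|I|)=\binom{|I|+d}{d}$. $Q_k^\circ(g_{J_j}):=\{(\mathbf{v}^{I_j}_k)^\top\mathbf{G}_0\mathbf{v}^{I_j}_k+\sum_{i\in J_j}g_i(\mathbf{v}^{I_j}_{k-\lceil g_i\rceil})^\top\mathbf{G}_i\mathbf{v}^{I_j}_{k-\lceil g_i\rceil}:\ \mathbf{G}_0,\mathbf{G}_i \text{ real symmetric positive definite}\}$. For $\mathbf{y}=(y_\alpha)_{\alpha\in\mathbb{N}^n_{2k}}$: $\mathbf{M}_d(\mathbf{y},I)=(y_{\alpha+\beta})_{\alpha,\beta\in\mathbb{N}^I_d}$, $\mathbf{M}_d(q\mathbf{y},I)=(\sum_\gamma q_\gamma y_{\alpha+\beta+\gamma})_{\alpha,\beta\in\mathbb{N}^I_d}$ for $q\in\mathbb{R}[\mathbf{x}(I)]$; $\mathbf{D}_k(\mathbf{y},I_j):=\mathrm{diag}(\mathbf{M}_k(\mathbf{y},I_j),(\mathbf{M}_{k-\lceil g_i\rceil}(g_i\mathbf{y},I_j))_{i\in J_j})$. CTP with correlative sparsity: for every integer $k\ge k_{\min}$ and every $j\in[p]$ there exist $a^{(j)}_k>0$ and a positive definite matrix $\mathbf{P}^{(j)}_k$ with the same block-diagonal structure as $\mathbf{D}_k(\mathbf{y},I_j)$ such that every $\mathbf{y}\in\mathbb{R}^{s(2k)}$ with $\mathbf{M}_{k-\lceil h_i\rceil}(h_i\mathbf{y},I_j)=0$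 ($i\in W_j$) and $y_{\mathbf{0}}=1$ satisfies $\mathrm{trace}(\mathbf{P}^{(j)}_k\mathbf{D}_k(\mathbf{y},I_j)\mathbf{P}^{(j)}_k)=a^{(j)}_k$. *)

theory Defs
  imports Complex_Main "HOL-Library.Poly_Mapping"
begin

text \<open>Multivariate real polynomials: finitely supported maps from monomials
(exponent vectors, finitely supported maps nat to nat) to real coefficients.
Variable x_t is indexed by t :: nat; the n variables are x_0,...,x_(n-1).
Multiplication is the convolution product of Poly_Mapping.\<close>

type_synonym monom = "nat \<Rightarrow>\<^sub>0 nat"
type_synonym rpoly = "monom \<Rightarrow>\<^sub>0 real"

definition mdeg :: "monom \<Rightarrow> nat" where
  "mdeg \<alpha> = (\<Sum>i\<in>Poly_Mapping.keys \<alpha>. Poly_Mapping.lookup \<alpha> i)"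

definition pdeg :: "rpoly \<Rightarrow> nat" where
  "pdeg q = (if Poly_Mapping.keys q = {} then 0 else Max (mdeg ` Poly_Mapping.keys q))"

definition hdeg :: "rpoly \<Rightarrow> nat" where
  "hdeg q = (pdeg q + 1) div 2"

definition const :: "real \<Rightarrow> rpoly" where
  "const c = Poly_Mapping.single 0 c"

definition var :: "nat \<Rightarrow> rpoly" where
  "var t = Poly_Mapping.single (Poly_Mapping.single t 1) 1"

definition in_vars :: "nat set \<Rightarrow> rpoly \<Rightarrow> bool" where
  "in_vars I q \<longleftrightarrow> (\<forall>\<alpha>\<in>Poly_Mapping.keys q. Poly_Mapping.keys \<alpha> \<subseteq> I)"

definition mons :: "nat set \<Rightarrow> nat \<Rightarrow> monom set" where
  "mons I d = {\<alpha>. Poly_Mapping.keys \<alpha> \<subseteq> I \<and> mdeg \<alpha> \<le> d}"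

definition posdef :: "'a set \<Rightarrow> ('a \<Rightarrow> 'a \<Rightarrow> real) \<Rightarrow> bool" where
  "posdef B G \<longleftrightarrow> (\<forall>a\<in>B. \<forall>b\<in>B. G a b = G b a) \<and>
     (\<forall>u. (\<exists>a\<in>B. u a \<noteq> 0) \<longrightarrow> (\<Sum>a\<in>B. \<Sum>b\<in>B. u a * G a b * u b) > 0)"

definition gram :: "monom set \<Rightarrow> (monom \<Rightarrow> monom \<Rightarrow> real) \<Rightarrow> rpoly" where
  "gram B G = (\<Sum>\<alpha>\<in>B. \<Sum>\<beta>\<in>B. Poly_Mapping.single (\<alpha> + \<beta>) (G \<alpha> \<beta>))"

definition Qcirc :: "nat \<Rightarrow> nat set \<Rightarrow> (nat \<Rightarrow> rpoly) \<Rightarrow> nat set \<Rightarrow> rpoly set" where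
  "Qcirc k I g J = {q. \<exists>G0 G. posdef (mons I k) G0 \<and>
      (\<forall>i\<in>J. posdef (mons I (k - hdeg (g i))) (G i)) \<and>
      q = gram (mons I k) G0 + (\<Sum>i\<in>J. g i * gram (mons I (k - hdeg (g i))) (G i))}"

definition locmat :: "rpoly \<Rightarrow> (monom \<Rightarrow> real) \<Rightarrow> monom \<Rightarrow> monom \<Rightarrow> real" where
  "locmat q y \<alpha> \<beta> = (\<Sum>\<gamma>\<in>Poly_Mapping.keys q. Poly_Mapping.lookup q \<gamma> * y (\<alpha> + \<beta> + \<gamma>))"

definition trPMP :: "'a set \<Rightarrow> ('a \<Rightarrow> 'a \<Rightarrow> real) \<Rightarrow> ('a \<Rightarrow> 'a \<Rightarrow> real) \<Rightarrow> real" where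
  "trPMP B P M = (\<Sum>a\<in>B. \<Sum>b\<in>B. \<Sum>c\<in>B. P a b * M b c * P c a)"

definition kmin :: "rpoly \<Rightarrow> nat \<Rightarrow> (nat \<Rightarrow> rpoly) \<Rightarrow> nat \<Rightarrow> (nat \<Rightarrow> rpoly) \<Rightarrow> nat" where
  "kmin f m g l h = Max ({hdeg f} \<union> hdeg ` g ` {0..<m} \<union> hdeg ` h ` {0..<l})"

text \<open>The positive definite
block-diagonal matrix P^(j)_k is given by its diagonal blocks P0 (for M_k(y,I_j))
and P i (for M_{k-ceil(g_i)}(g_i y, I_j), i in J_j); the trace of P D P is the
sum of the traces of the blocks. y ranges over all real functions on monomials
(only entries y_alpha with |alpha| <= 2k are ever read).\<close>
definition CTP_cs ::
  "rpoly \<Rightarrow> nat \<Rightarrow> (nat \<Rightarrow> rpoly) \<Rightarrow> nat \<Rightarrow> (nat \<Rightarrow> rpoly) \<Rightarrow> nat \<Rightarrow>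
   (nat \<Rightarrow> nat set) \<Rightarrow> (nat \<Rightarrow> nat set) \<Rightarrow> (nat \<Rightarrow> nat set) \<Rightarrow> bool" where
  "CTP_cs f m g l h p I J W \<longleftrightarrow>
    (\<forall>k\<ge>kmin f m g l h. \<forall>j<p. \<exists>a>0. \<exists>P0 P.
       posdef (mons (I j) k) P0 \<and>
       (\<forall>i\<in>J j. posdef (mons (I j) (k - hdeg (g i))) (P i)) \<and>
       (\<forall>y :: monom \<Rightarrow> real.
          (\<forall>i\<in>W j. \<forall>\<alpha>\<in>mons (I j) (k - hdeg (h i)). \<forall>\<beta>\<in>mons (I j) (k - hdeg (h i)).
              locmat (h i) y \<alpha> \<beta> = 0) \<and> y 0 = 1 \<longrightarrow>
          trPMP (mons (I j) k) P0 (locmat 1 y) +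
          (\<Sum>i\<in>J j. trPMP (mons (I j) (k - hdeg (g i))) (P i) (locmat (g i) y)) = a))"

end

(*
  Fix a clique I_j and k >= k_min. By maximality of the cliques, the ball constraint
  R - |x(I_j)|^2 belongs to g_(J_j), and it gives an explicit identity

    c = sum_alpha d_alpha x^(2 alpha) + (R - |x(I_j)|^2) sum_beta w_beta x^(2 beta),
    w_beta = c/(2R) (2R)^(-|beta|),

  with all d_alpha > 0. Every other constraint g_i is given the Gram matrix delta Id; the
  polynomial delta Q added in this way is compensated by subtracting delta E from diag d, where
  E is a symmetric Gram matrix of Q. For small delta, diag d - delta E is positive definite and in
  fact the square of a positive definite matrix (Banach's fixed point theorem). Hence
  c lies in Q_k(g_(J_j)) with all Gram matrices of the form P^2, and since
  trace (P M_q(y) P) = L_y(q v^T P^2 v), the trace in the constant trace property is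
  L_y(c) = c y_0 = c.
*)

theory Submission
  imports Defs "HOL-Analysis.Urysohn"
begin

section \<open>Matrices indexed by a finite set\<close>

definition mat_mult :: "'a set \<Rightarrow> ('a \<Rightarrow> 'a \<Rightarrow> real) \<Rightarrow> ('a \<Rightarrow> 'a \<Rightarrow> real) \<Rightarrow> 'a \<Rightarrow> 'a \<Rightarrow> real" where
  "mat_mult B X Y a b = (\<Sum>c\<in>B. X a c * Y c b)"

definition mat_norm1 :: "'a set \<Rightarrow> ('a \<Rightarrow> 'a \<Rightarrow> real) \<Rightarrow> real" where
  "mat_norm1 B X = (\<Sum>a\<in>B. \<Sum>b\<in>B. \<bar>X a b\<bar>)"

definition diag_mat :: "('a \<Rightarrow> real) \<Rightarrow> 'a \<Rightarrow> 'a \<Rightarrow> real" where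
  "diag_mat s a b = (if a = b then s a else 0)"

definition has_posdef_sqrt :: "'a set \<Rightarrow> ('a \<Rightarrow> 'a \<Rightarrow> real) \<Rightarrow> bool" where
  "has_posdef_sqrt B G \<longleftrightarrow> (\<exists>P. posdef B P \<and> (\<forall>a\<in>B. \<forall>b\<in>B. mat_mult B P P a b = G a b))"

lemma mat_norm1_nonneg: "mat_norm1 B X \<ge> 0"
  unfolding mat_norm1_def by (intro sum_nonneg) auto

lemma abs_entry_le_mat_norm1:
  assumes "finite B" "a \<in> B" "b \<in> B" shows "\<bar>X a b\<bar> \<le> mat_norm1 B X"
proof -
  have "\<bar>X a b\<bar> \<le> (\<Sum>b\<in>B. \<bar>X a b\<bar>)" using assms by (intro member_le_sum) auto
  also have "\<dots> \<le> mat_norm1 B X" unfolding mat_norm1_def using assms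
    by (intro member_le_sum[where f="\<lambda>a. \<Sum>b\<in>B. \<bar>X a b\<bar>"]) (auto intro: sum_nonneg)
  finally show ?thesis .
qed

lemma mat_norm1_add: "mat_norm1 B (\<lambda>a b. X a b + Y a b) \<le> mat_norm1 B X + mat_norm1 B Y"
  unfolding mat_norm1_def by (simp add: sum.distrib[symmetric] sum_mono abs_triangle_ineq)

lemma mat_norm1_uminus: "mat_norm1 B (\<lambda>a b. - X a b) = mat_norm1 B X"
  by (simp add: mat_norm1_def)

lemma mat_norm1_scale: "mat_norm1 B (\<lambda>a b. c * X a b) = \<bar>c\<bar> * mat_norm1 B X"
  by (simp add: mat_norm1_def abs_mult sum_distrib_left)

lemma mat_norm1_mult:
  assumes "finite B" shows "mat_norm1 B (mat_mult B X Y) \<le> mat_norm1 B X * mat_norm1 B Y"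
proof -
  have "mat_norm1 B (mat_mult B X Y) \<le> (\<Sum>a\<in>B. \<Sum>b\<in>B. \<Sum>c\<in>B. \<bar>X a c\<bar> * \<bar>Y c b\<bar>)"
    unfolding mat_norm1_def mat_mult_def
    by (intro sum_mono) (auto intro: order.trans[OF sum_abs] simp: abs_mult)
  also have "\<dots> = (\<Sum>a\<in>B. \<Sum>c\<in>B. \<Sum>b\<in>B. \<bar>X a c\<bar> * \<bar>Y c b\<bar>)"
    by (intro sum.cong refl sum.swap)
  also have "\<dots> = (\<Sum>a\<in>B. \<Sum>c\<in>B. \<bar>X a c\<bar> * (\<Sum>b\<in>B. \<bar>Y c b\<bar>))"
    by (simp add: sum_distrib_left)
  also have "\<dots> \<le> (\<Sum>a\<in>B. \<Sum>c\<in>B. \<bar>X a c\<bar> * mat_norm1 B Y)"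
    unfolding mat_norm1_def using assms
    by (intro sum_mono mult_left_mono member_le_sum[where f="\<lambda>a. \<Sum>b\<in>B. \<bar>Y a b\<bar>"]) (auto intro: sum_nonneg)
  also have "\<dots> = mat_norm1 B X * mat_norm1 B Y" unfolding mat_norm1_def by (simp add: sum_distrib_right)
  finally show ?thesis .
qed

lemma abs_prod_le_sum_squares: "\<bar>(x::real) * y\<bar> \<le> x\<^sup>2 + y\<^sup>2"
proof -
  have "2 * \<bar>x\<bar> * \<bar>y\<bar> \<le> x\<^sup>2 + y\<^sup>2" using sum_squares_bound[of "\<bar>x\<bar>" "\<bar>y\<bar>"] by simp
  moreover have "0 \<le> \<bar>x\<bar> * \<bar>y\<bar>" by simp
  ultimately show ?thesis unfolding abs_mult mult.assoc by linarith
qed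

lemma abs_quadratic_form_le:
  assumes "finite B"
  shows "\<bar>\<Sum>a\<in>B. \<Sum>b\<in>B. u a * X a b * u b\<bar> \<le> mat_norm1 B X * (\<Sum>a\<in>B. (u a)\<^sup>2)"
proof -
  let ?U = "\<Sum>a\<in>B. (u a)\<^sup>2"
  have uu: "\<bar>u a * u b\<bar> \<le> ?U" if "a \<in> B" "b \<in> B" for a b
  proof -
    have "\<bar>u a * u b\<bar> \<le> (\<Sum>c\<in>{a,b}. (u c)\<^sup>2)"
    proof (cases "a = b")
      case False
      then show ?thesis using abs_prod_le_sum_squares[of "u a" "u b"] by simp
    qed (simp add: power2_eq_square abs_mult)
    also have "\<dots> \<le> ?U" using that assms by (intro sum_mono2) auto
    finally show ?thesis .
  qed
  have "\<bar>\<Sum>a\<in>B. \<Sum>b\<in>B. u a * X a b * u b\<bar> \<le> (\<Sum>a\<in>B. \<Sum>b\<in>B. \<bar>X a b\<bar> * ?U)"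
  proof (intro order.trans[OF sum_abs] sum_mono order.trans[OF sum_abs])
    fix a b assume "a \<in> B" "b \<in> B"
    then have "\<bar>X a b\<bar> * \<bar>u a * u b\<bar> \<le> \<bar>X a b\<bar> * ?U" by (intro mult_left_mono uu) auto
    then show "\<bar>u a * X a b * u b\<bar> \<le> \<bar>X a b\<bar> * ?U" by (simp add: abs_mult mult_ac)
  qed
  also have "\<dots> = mat_norm1 B X * ?U" unfolding mat_norm1_def by (simp add: sum_distrib_right)
  finally show ?thesis .
qed

lemma quadratic_form_diag_mat:
  assumes "finite B"
  shows "(\<Sum>a\<in>B. \<Sum>b\<in>B. u a * diag_mat s a b * u b) = (\<Sum>a\<in>B. s a * (u a)\<^sup>2)"
proof -
  have "(\<Sum>b\<in>B. u a * diag_mat s a b * u b) = (\<Sum>b\<in>B. if a = b then s a * (u a)\<^sup>2 else 0)" for a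
    by (intro sum.cong) (auto simp: diag_mat_def power2_eq_square)
  then show ?thesis using assms by simp
qed

lemma mat_mult_diag_left: "finite B \<Longrightarrow> a \<in> B \<Longrightarrow> mat_mult B (diag_mat s) Y a b = s a * Y a b"
  by (simp add: mat_mult_def diag_mat_def if_distrib[of "\<lambda>x. x * _"] cong: if_cong)

lemma mat_mult_diag_right: "finite B \<Longrightarrow> b \<in> B \<Longrightarrow> mat_mult B X (diag_mat s) a b = X a b * s b"
  by (simp add: mat_mult_def diag_mat_def if_distrib[of "\<lambda>x. _ * x"] cong: if_cong)

lemma posdef_diag_mat:
  assumes "finite B" "\<forall>a\<in>B. s a > 0" shows "posdef B (diag_mat s)"
  unfolding posdef_def
proof (intro conjI allI impI ballI)
  fix u :: "'a \<Rightarrow> real" assume "\<exists>a\<in>B. u a \<noteq> 0"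
  then obtain a where "a \<in> B" "u a \<noteq> 0" by blast
  then have "0 < (\<Sum>a\<in>B. s a * (u a)\<^sup>2)"
    using assms by (intro sum_pos2[of B a]) auto
  then show "0 < (\<Sum>a\<in>B. \<Sum>b\<in>B. u a * diag_mat s a b * u b)"
    by (simp add: quadratic_form_diag_mat[OF assms(1)])
qed (auto simp: diag_mat_def)

lemma has_posdef_sqrt_diag_mat:
  assumes "finite B" "\<forall>a\<in>B. s a > 0" shows "has_posdef_sqrt B (diag_mat s)"
  unfolding has_posdef_sqrt_def
proof (intro exI conjI ballI)
  show "posdef B (diag_mat (\<lambda>a. sqrt (s a)))" using assms by (intro posdef_diag_mat) auto
  fix a b assume "a \<in> B" "b \<in> B"
  then show "mat_mult B (diag_mat (\<lambda>a. sqrt (s a))) (diag_mat (\<lambda>a. sqrt (s a))) a b = diag_mat s a b"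
    using assms by (auto simp: mat_mult_diag_left diag_mat_def less_imp_le)
qed

lemma posdef_mat_mult_self:
  assumes fin: "finite B" and P: "posdef B P" shows "posdef B (mat_mult B P P)"
  unfolding posdef_def
proof (intro conjI allI impI ballI)
  have sym: "\<And>a b. a \<in> B \<Longrightarrow> b \<in> B \<Longrightarrow> P a b = P b a" using P by (auto simp: posdef_def)
  then show "mat_mult B P P a b = mat_mult B P P b a" if "a \<in> B" "b \<in> B" for a b
    using that unfolding mat_mult_def by (intro sum.cong) (auto simp: mult.commute)
  fix u :: "'a \<Rightarrow> real" assume u: "\<exists>a\<in>B. u a \<noteq> 0"
  define v where "v c = (\<Sum>a\<in>B. u a * P a c)" for c
  have "(\<Sum>a\<in>B. \<Sum>b\<in>B. u a * mat_mult B P P a b * u b) = (\<Sum>a\<in>B. \<Sum>b\<in>B. \<Sum>c\<in>B. u a * P a c * (P c b * u b))"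
    unfolding mat_mult_def by (simp add: sum_distrib_left sum_distrib_right mult.assoc)
  also have "\<dots> = (\<Sum>a\<in>B. \<Sum>c\<in>B. \<Sum>b\<in>B. u a * P a c * (P c b * u b))"
    by (intro sum.cong refl sum.swap)
  also have "\<dots> = (\<Sum>c\<in>B. \<Sum>a\<in>B. \<Sum>b\<in>B. u a * P a c * (P c b * u b))"
    by (rule sum.swap)
  also have "\<dots> = (\<Sum>c\<in>B. v c * v c)"
  proof (intro sum.cong refl)
    fix c assume "c \<in> B"
    then have "v c = (\<Sum>b\<in>B. P c b * u b)" unfolding v_def by (intro sum.cong) (auto simp: sym)
    moreover have "(\<Sum>a\<in>B. \<Sum>b\<in>B. u a * P a c * (P c b * u b)) = (\<Sum>a\<in>B. u a * P a c) * (\<Sum>b\<in>B. P c b * u b)"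
      by (simp add: sum_product)
    ultimately show "(\<Sum>a\<in>B. \<Sum>b\<in>B. u a * P a c * (P c b * u b)) = v c * v c"
      by (simp add: v_def)
  qed
  finally have eq: "(\<Sum>a\<in>B. \<Sum>b\<in>B. u a * mat_mult B P P a b * u b) = (\<Sum>c\<in>B. v c * v c)" .
  have "\<exists>c\<in>B. v c \<noteq> 0"
  proof (rule ccontr)
    assume "\<not> (\<exists>c\<in>B. v c \<noteq> 0)"
    then have "(\<Sum>b\<in>B. v b * u b) = 0" by simp
    moreover have "(\<Sum>a\<in>B. \<Sum>b\<in>B. u a * P a b * u b) = (\<Sum>b\<in>B. v b * u b)"
      unfolding v_def by (subst sum.swap) (simp add: sum_distrib_right)
    moreover have "0 < (\<Sum>a\<in>B. \<Sum>b\<in>B. u a * P a b * u b)" using P u by (auto simp: posdef_def)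
    ultimately show False by simp
  qed
  then obtain c where "c \<in> B" "v c \<noteq> 0" by blast
  then show "0 < (\<Sum>a\<in>B. \<Sum>b\<in>B. u a * mat_mult B P P a b * u b)"
    unfolding eq using fin by (intro sum_pos2[of B c]) (auto simp: zero_less_mult_iff)
qed

lemma has_posdef_sqrt_imp_posdef:
  assumes "finite B" "has_posdef_sqrt B G" shows "posdef B G"
proof -
  obtain P where P: "posdef B P" and G: "\<forall>a\<in>B. \<forall>b\<in>B. mat_mult B P P a b = G a b"
    using assms(2) by (auto simp: has_posdef_sqrt_def)
  have "posdef B (mat_mult B P P)" using posdef_mat_mult_self[OF assms(1) P] .
  moreover have "(\<Sum>a\<in>B. \<Sum>b\<in>B. u a * mat_mult B P P a b * u b) = (\<Sum>a\<in>B. \<Sum>b\<in>B. u a * G a b * u b)" for u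
    using G by simp
  ultimately show ?thesis using G by (simp add: posdef_def)
qed

lemma mat_norm1_divide_le:
  assumes "\<mu> > 0" "\<forall>a\<in>B. s a \<ge> \<mu>"
  shows "mat_norm1 B (\<lambda>a b. X a b / (s a + s b)) \<le> mat_norm1 B X / (2 * \<mu>)"
proof -
  have "\<bar>X a b / (s a + s b)\<bar> \<le> \<bar>X a b\<bar> / (2 * \<mu>)" if "a \<in> B" "b \<in> B" for a b
    using assms that[THEN bspec[OF assms(2)]] by (simp add: abs_divide frac_le)
  then have "mat_norm1 B (\<lambda>a b. X a b / (s a + s b)) \<le> (\<Sum>a\<in>B. \<Sum>b\<in>B. \<bar>X a b\<bar> / (2 * \<mu>))"
    unfolding mat_norm1_def by (intro sum_mono) auto
  also have "\<dots> = mat_norm1 B X / (2 * \<mu>)"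
    by (simp add: mat_norm1_def sum_divide_distrib)
  finally show ?thesis .
qed

lemma mat_mult_self_diff:
  "mat_mult B F F a b - mat_mult B G G a b
     = mat_mult B F (\<lambda>a b. F a b - G a b) a b + mat_mult B (\<lambda>a b. F a b - G a b) G a b"
  unfolding mat_mult_def by (simp add: sum.distrib[symmetric] sum_subtractf[symmetric] algebra_simps)

lemma mat_mult_diag_plus_self:
  assumes "finite B" "a \<in> B" "b \<in> B"
  shows "mat_mult B (\<lambda>a b. diag_mat s a b + F a b) (\<lambda>a b. diag_mat s a b + F a b) a b
     = diag_mat (\<lambda>a. (s a)\<^sup>2) a b + (s a + s b) * F a b + mat_mult B F F a b"
proof -
  have "mat_mult B (\<lambda>a b. diag_mat s a b + F a b) (\<lambda>a b. diag_mat s a b + F a b) a b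
      = mat_mult B (diag_mat s) (diag_mat s) a b + mat_mult B (diag_mat s) F a b
        + mat_mult B F (diag_mat s) a b + mat_mult B F F a b"
    unfolding mat_mult_def by (simp add: sum.distrib[symmetric] algebra_simps)
  then show ?thesis
    using assms by (simp add: mat_mult_diag_left mat_mult_diag_right diag_mat_def power2_eq_square algebra_simps)
qed

lemma posdef_diag_plus_small:
  assumes fin: "finite B" and \<mu>: "\<mu> > 0" and s: "\<forall>a\<in>B. s a \<ge> \<mu>"
    and F_sym: "\<forall>a b. F a b = F b a" and F_small: "mat_norm1 B F < \<mu>"
  shows "posdef B (\<lambda>a b. diag_mat s a b + F a b)"
  unfolding posdef_def
proof (intro conjI ballI allI impI)
  fix a b show "diag_mat s a b + F a b = diag_mat s b a + F b a"
    using F_sym by (simp add: diag_mat_def)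
next
  fix u :: "'a \<Rightarrow> real" assume "\<exists>a\<in>B. u a \<noteq> 0"
  then obtain a where "a \<in> B" "u a \<noteq> 0" by blast
  let ?U = "\<Sum>a\<in>B. (u a)\<^sup>2"
  have U: "?U > 0" using \<open>a \<in> B\<close> \<open>u a \<noteq> 0\<close> fin by (intro sum_pos2[of B a]) auto
  have "\<mu> * ?U \<le> (\<Sum>a\<in>B. s a * (u a)\<^sup>2)"
    unfolding sum_distrib_left using s by (intro sum_mono mult_right_mono) auto
  also have "\<dots> = (\<Sum>a\<in>B. \<Sum>b\<in>B. u a * diag_mat s a b * u b)"
    by (rule quadratic_form_diag_mat[OF fin, symmetric])
  finally have diag: "\<mu> * ?U \<le> (\<Sum>a\<in>B. \<Sum>b\<in>B. u a * diag_mat s a b * u b)" .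
  have "\<bar>\<Sum>a\<in>B. \<Sum>b\<in>B. u a * F a b * u b\<bar> < \<mu> * ?U"
    using abs_quadratic_form_le[OF fin, of u F] F_small U by (meson mult_strict_right_mono order.strict_trans1)
  moreover have "(\<Sum>a\<in>B. \<Sum>b\<in>B. u a * (diag_mat s a b + F a b) * u b)
      = (\<Sum>a\<in>B. \<Sum>b\<in>B. u a * diag_mat s a b * u b) + (\<Sum>a\<in>B. \<Sum>b\<in>B. u a * F a b * u b)"
    by (simp add: sum.distrib[symmetric] algebra_simps)
  ultimately show "0 < (\<Sum>a\<in>B. \<Sum>b\<in>B. u a * (diag_mat s a b + F a b) * u b)"
    using diag by linarith
qed

lemma finite_pos_lower_bound:
  fixes d :: "'a \<Rightarrow> real"
  assumes "finite B" "\<forall>a\<in>B. d a > 0"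
  obtains m where "m > 0" "\<forall>a\<in>B. d a \<ge> m"
proof (cases "B = {}")
  case False
  then show thesis
    using assms by (intro that[of "Min (d ` B)"]) (simp_all add: Min_gr_iff)
qed (auto intro: that[of 1])

lemma small_multiple_mat_norm1:
  assumes "r > 0" obtains \<delta> :: real where "\<delta> > 0" "mat_norm1 B (\<lambda>a b. \<delta> * E a b) \<le> r"
proof
  let ?N = "mat_norm1 B E"
  have N: "?N \<ge> 0" by (rule mat_norm1_nonneg)
  then show "r / (?N + 1) > 0" using assms by simp
  have "mat_norm1 B (\<lambda>a b. r / (?N + 1) * E a b) = \<bar>r / (?N + 1)\<bar> * ?N"
    by (rule mat_norm1_scale)
  also have "\<dots> = r * (?N / (?N + 1))"
    using assms N by simp
  also have "\<dots> \<le> r * 1" using assms N by (intro mult_left_mono) auto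
  finally show "mat_norm1 B (\<lambda>a b. r / (?N + 1) * E a b) \<le> r" by simp
qed

section \<open>Square roots of perturbed diagonal matrices\<close>

text \<open>Entries outside \<open>B\<close> must vanish, so that \<open>mat_dist B\<close> is a metric on this set.\<close>

definition sym_mat_ball :: "'a set \<Rightarrow> real \<Rightarrow> ('a \<Rightarrow> 'a \<Rightarrow> real) set" where
  "sym_mat_ball B r = {F. (\<forall>a b. F a b = F b a) \<and> (\<forall>a b. a \<notin> B \<or> b \<notin> B \<longrightarrow> F a b = 0) \<and> mat_norm1 B F \<le> r}"

definition mat_dist :: "'a set \<Rightarrow> ('a \<Rightarrow> 'a \<Rightarrow> real) \<Rightarrow> ('a \<Rightarrow> 'a \<Rightarrow> real) \<Rightarrow> real" where
  "mat_dist B F G = mat_norm1 B (\<lambda>a b. F a b - G a b)"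

lemma abs_entry_le_mat_dist:
  assumes "finite B" "F \<in> sym_mat_ball B r" "G \<in> sym_mat_ball B r'"
  shows "\<bar>F a b - G a b\<bar> \<le> mat_dist B F G"
  using assms abs_entry_le_mat_norm1[OF assms(1), of a b "\<lambda>a b. F a b - G a b"] mat_norm1_nonneg
  by (cases "a \<in> B \<and> b \<in> B") (auto simp: sym_mat_ball_def mat_dist_def)

lemma Metric_space_sym_mat_ball:
  assumes "finite B" shows "Metric_space (sym_mat_ball B r) (mat_dist B)"
proof
  fix F G H
  show "0 \<le> mat_dist B F G" by (simp add: mat_dist_def mat_norm1_nonneg)
  show "mat_dist B F G = mat_dist B G F" by (simp add: mat_dist_def mat_norm1_def abs_minus_commute)
  show "mat_dist B F H \<le> mat_dist B F G + mat_dist B G H"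
    using mat_norm1_add[of B "\<lambda>a b. F a b - G a b" "\<lambda>a b. G a b - H a b"] by (simp add: mat_dist_def)
  assume F: "F \<in> sym_mat_ball B r" and G: "G \<in> sym_mat_ball B r"
  show "mat_dist B F G = 0 \<longleftrightarrow> F = G"
  proof
    assume "mat_dist B F G = 0"
    then have "\<bar>F a b - G a b\<bar> \<le> 0" for a b using abs_entry_le_mat_dist[OF assms F G] by metis
    then show "F = G" by (auto intro!: ext)
  qed (simp add: mat_dist_def mat_norm1_def)
qed

lemma sym_mat_ball_closed:
  assumes \<sigma>: "\<And>n. \<sigma> n \<in> sym_mat_ball B r" and lim: "\<And>a b. (\<lambda>n. \<sigma> n a b) \<longlonglongrightarrow> F a b"
  shows "F \<in> sym_mat_ball B r"
  unfolding sym_mat_ball_def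
proof (intro CollectI conjI allI impI)
  fix a b
  show "F a b = F b a"
    using lim[of a b] lim[of b a] \<sigma> by (simp add: sym_mat_ball_def LIMSEQ_unique)
  show "F a b = 0" if "a \<notin> B \<or> b \<notin> B"
    using lim[of a b] \<sigma> that by (simp add: sym_mat_ball_def LIMSEQ_const_iff)
next
  have "(\<lambda>n. mat_norm1 B (\<sigma> n)) \<longlonglongrightarrow> mat_norm1 B F"
    unfolding mat_norm1_def by (intro tendsto_intros lim)
  then show "mat_norm1 B F \<le> r"
    using \<sigma> by (intro LIMSEQ_le_const2) (auto simp: sym_mat_ball_def)
qed

lemma mcomplete_sym_mat_ball:
  assumes fin: "finite B" shows "Metric_space.mcomplete (sym_mat_ball B r) (mat_dist B)"
proof -
  interpret Metric_space "sym_mat_ball B r" "mat_dist B"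
    using fin by (rule Metric_space_sym_mat_ball)
  show ?thesis unfolding mcomplete_def
  proof (intro allI impI)
    fix \<sigma> assume "MCauchy \<sigma>"
    then have \<sigma>: "\<And>n. \<sigma> n \<in> sym_mat_ball B r"
      and cauchy: "\<forall>\<epsilon>>0. \<exists>N. \<forall>n n'. N \<le> n \<longrightarrow> N \<le> n' \<longrightarrow> mat_dist B (\<sigma> n) (\<sigma> n') < \<epsilon>"
      by (auto simp: MCauchy_def)
    have Cauchy: "Cauchy (\<lambda>n. \<sigma> n a b)" for a b
    proof (rule metric_CauchyI)
      fix \<epsilon> :: real assume "\<epsilon> > 0"
      then obtain N where N: "\<forall>n n'. N \<le> n \<longrightarrow> N \<le> n' \<longrightarrow> mat_dist B (\<sigma> n) (\<sigma> n') < \<epsilon>"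
        using cauchy by blast
      have "dist (\<sigma> n a b) (\<sigma> n' a b) < \<epsilon>" if "N \<le> n" "N \<le> n'" for n n'
        using abs_entry_le_mat_dist[OF fin \<sigma>[of n] \<sigma>[of n'], of a b] N that
        by (simp add: dist_real_def) (meson order.strict_trans1)
      then show "\<exists>N. \<forall>n\<ge>N. \<forall>n'\<ge>N. dist (\<sigma> n a b) (\<sigma> n' a b) < \<epsilon>"
        by blast
    qed
    define F where "F a b = lim (\<lambda>n. \<sigma> n a b)" for a b
    have lim: "(\<lambda>n. \<sigma> n a b) \<longlonglongrightarrow> F a b" for a b
      using Cauchy by (simp add: F_def Cauchy_convergent_iff convergent_LIMSEQ_iff)
    have "(\<lambda>n. mat_dist B (\<sigma> n) F) \<longlonglongrightarrow> mat_dist B F F"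
      unfolding mat_dist_def mat_norm1_def by (intro tendsto_intros lim)
    then show "\<exists>F. limitin mtopology \<sigma> F sequentially"
      using \<sigma> sym_mat_ball_closed[OF \<sigma> lim]
      by (intro exI[of _ F]) (simp add: limitin_metric_dist_null mat_dist_def mat_norm1_def)
  qed
qed

text \<open>On \<open>B\<close>, \<open>(diag_mat s + F)\<^sup>2 = diag_mat (s\<^sup>2) - E\<close> means
  \<open>(s a + s b) * F a b = - E a b - (F * F) a b\<close>, i.e. that \<open>F\<close> is a fixed point of \<open>sqrt_step B s E\<close>.\<close>

definition sqrt_step :: "'a set \<Rightarrow> ('a \<Rightarrow> real) \<Rightarrow> ('a \<Rightarrow> 'a \<Rightarrow> real) \<Rightarrow> ('a \<Rightarrow> 'a \<Rightarrow> real) \<Rightarrow> 'a \<Rightarrow> 'a \<Rightarrow> real" where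
  "sqrt_step B s E F a b = (if a \<in> B \<and> b \<in> B then (- E a b - mat_mult B F F a b) / (s a + s b) else 0)"

lemma sqrt_step_maps_sym_mat_ball:
  assumes fin: "finite B" and \<mu>: "\<mu> > 0" and s: "\<forall>a\<in>B. s a \<ge> \<mu>"
    and E_sym: "\<forall>a b. E a b = E b a" and E_small: "mat_norm1 B E \<le> \<mu>\<^sup>2 / 2"
  shows "sqrt_step B s E \<in> sym_mat_ball B (\<mu> / 2) \<rightarrow> sym_mat_ball B (\<mu> / 2)"
proof
  fix F assume "F \<in> sym_mat_ball B (\<mu> / 2)"
  then have F_sym: "\<forall>a b. F a b = F b a" and F_small: "mat_norm1 B F \<le> \<mu> / 2"
    by (auto simp: sym_mat_ball_def)
  have "mat_mult B F F a b = mat_mult B F F b a" for a b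
    unfolding mat_mult_def using F_sym by (intro sum.cong) (auto simp: mult.commute)
  then have "sqrt_step B s E F a b = sqrt_step B s E F b a" for a b
    by (auto simp: sqrt_step_def E_sym add.commute)
  moreover have "mat_norm1 B (sqrt_step B s E F) \<le> \<mu> / 2"
  proof -
    have "mat_norm1 B (sqrt_step B s E F) = mat_norm1 B (\<lambda>a b. (- E a b - mat_mult B F F a b) / (s a + s b))"
      by (simp add: mat_norm1_def sqrt_step_def)
    also have "\<dots> \<le> mat_norm1 B (\<lambda>a b. - E a b - mat_mult B F F a b) / (2 * \<mu>)"
      by (rule mat_norm1_divide_le[OF \<mu> s])
    also have "mat_norm1 B (\<lambda>a b. - E a b - mat_mult B F F a b) \<le> mat_norm1 B E + mat_norm1 B F * mat_norm1 B F"
      using mat_norm1_add[of B "\<lambda>a b. - E a b" "\<lambda>a b. - mat_mult B F F a b"] mat_norm1_mult[OF fin, of F F]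
      by (simp add: mat_norm1_def)
    also have "\<dots> \<le> \<mu>\<^sup>2 / 2 + (\<mu> / 2) * (\<mu> / 2)"
      using E_small F_small mat_norm1_nonneg[of B F] by (intro add_mono mult_mono) auto
    finally show ?thesis using \<mu> by (simp add: divide_right_mono power2_eq_square field_simps)
  qed
  ultimately show "sqrt_step B s E F \<in> sym_mat_ball B (\<mu> / 2)"
    by (simp add: sym_mat_ball_def sqrt_step_def)
qed

lemma sqrt_step_contraction:
  assumes fin: "finite B" and \<mu>: "\<mu> > 0" and s: "\<forall>a\<in>B. s a \<ge> \<mu>"
    and F: "F \<in> sym_mat_ball B (\<mu> / 2)" and G: "G \<in> sym_mat_ball B (\<mu> / 2)"
  shows "mat_dist B (sqrt_step B s E F) (sqrt_step B s E G) \<le> 1/2 * mat_dist B F G"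
proof -
  let ?D = "\<lambda>a b. F a b - G a b"
  have small: "mat_norm1 B F \<le> \<mu> / 2" "mat_norm1 B G \<le> \<mu> / 2"
    using F G by (auto simp: sym_mat_ball_def)
  have "mat_dist B (sqrt_step B s E F) (sqrt_step B s E G)
      = mat_norm1 B (\<lambda>a b. - (mat_mult B F ?D a b + mat_mult B ?D G a b) / (s a + s b))"
    unfolding mat_dist_def mat_norm1_def
    by (intro sum.cong refl) (simp add: sqrt_step_def diff_divide_distrib[symmetric] mat_mult_self_diff[symmetric])
  also have "\<dots> \<le> mat_norm1 B (\<lambda>a b. - (mat_mult B F ?D a b + mat_mult B ?D G a b)) / (2 * \<mu>)"
    by (rule mat_norm1_divide_le[OF \<mu> s])
  also have "mat_norm1 B (\<lambda>a b. - (mat_mult B F ?D a b + mat_mult B ?D G a b))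
      \<le> mat_norm1 B F * mat_norm1 B ?D + mat_norm1 B ?D * mat_norm1 B G"
    using mat_norm1_uminus[of B "\<lambda>a b. mat_mult B F ?D a b + mat_mult B ?D G a b"]
      mat_norm1_add[of B "mat_mult B F ?D" "mat_mult B ?D G"] mat_norm1_mult[OF fin, of F ?D]
      mat_norm1_mult[OF fin, of ?D G]
    by linarith
  also have "\<dots> \<le> (\<mu> / 2) * mat_norm1 B ?D + mat_norm1 B ?D * (\<mu> / 2)"
    using small mat_norm1_nonneg[of B ?D] by (intro add_mono mult_right_mono mult_left_mono) auto
  finally show ?thesis using \<mu> by (simp add: divide_right_mono mat_dist_def field_simps)
qed

lemma sqrt_step_fixpoint:
  assumes fin: "finite B" and \<mu>: "\<mu> > 0" and s: "\<forall>a\<in>B. s a \<ge> \<mu>"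
    and E_sym: "\<forall>a b. E a b = E b a" and E_small: "mat_norm1 B E \<le> \<mu>\<^sup>2 / 2"
  obtains F where "F \<in> sym_mat_ball B (\<mu> / 2)" "sqrt_step B s E F = F"
proof -
  interpret Metric_space "sym_mat_ball B (\<mu> / 2)" "mat_dist B"
    using fin by (rule Metric_space_sym_mat_ball)
  have "(\<lambda>a b. 0) \<in> sym_mat_ball B (\<mu> / 2)" using \<mu> by (simp add: sym_mat_ball_def mat_norm1_def)
  then show thesis
    using Banach_fixedpoint_thm[OF mcomplete_sym_mat_ball[OF fin] _ sqrt_step_maps_sym_mat_ball[OF assms], of "1/2"]
      sqrt_step_contraction[OF fin \<mu> s] that
    by auto
qed

lemma has_posdef_sqrt_diag_minus_small:
  assumes fin: "finite B" and m: "m > 0" and d: "\<forall>a\<in>B. d a \<ge> m"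
    and E_sym: "\<forall>a b. E a b = E b a" and E_small: "mat_norm1 B E \<le> m / 2"
  shows "has_posdef_sqrt B (\<lambda>a b. diag_mat d a b - E a b)"
proof -
  define s where "s a = sqrt (d a)" for a
  have \<mu>: "sqrt m > 0" using m by simp
  have s: "\<forall>a\<in>B. s a \<ge> sqrt m" using d by (simp add: s_def)
  obtain F where F: "F \<in> sym_mat_ball B (sqrt m / 2)" and F_fixed: "sqrt_step B s E F = F"
    using sqrt_step_fixpoint[OF fin \<mu> s E_sym] E_small m by auto
  show ?thesis
    unfolding has_posdef_sqrt_def
  proof (intro exI conjI ballI)
    have "mat_norm1 B F \<le> sqrt m / 2" using F by (simp add: sym_mat_ball_def)
    then have "mat_norm1 B F < sqrt m" using \<mu> by linarith
    then show "posdef B (\<lambda>a b. diag_mat s a b + F a b)"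
      using F by (intro posdef_diag_plus_small[OF fin \<mu> s]) (auto simp: sym_mat_ball_def)
    fix a b assume ab: "a \<in> B" "b \<in> B"
    then have "s a + s b > 0" using s \<mu> by (smt (verit))
    then have "(s a + s b) * F a b = - E a b - mat_mult B F F a b"
      using fun_cong[OF fun_cong[OF F_fixed, of a], of b] ab by (simp add: sqrt_step_def field_simps)
    moreover have "diag_mat (\<lambda>a. (s a)\<^sup>2) a b = diag_mat d a b"
      using d m ab by (auto simp: diag_mat_def s_def)
    ultimately show "mat_mult B (\<lambda>a b. diag_mat s a b + F a b) (\<lambda>a b. diag_mat s a b + F a b) a b
        = diag_mat d a b - E a b"
      by (simp add: mat_mult_diag_plus_self[OF fin ab])
  qed
qed

section \<open>Gram polynomials and the Riesz functional\<close>

lemma mdeg_eq_sum: "finite S \<Longrightarrow> Poly_Mapping.keys \<alpha> \<subseteq> S \<Longrightarrow> mdeg \<alpha> = (\<Sum>i\<in>S. Poly_Mapping.lookup \<alpha> i)"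
  unfolding mdeg_def by (rule sum.mono_neutral_left) (auto simp: in_keys_iff)

lemma mdeg_zero [simp]: "mdeg 0 = 0"
  by (simp add: mdeg_def)

lemma mdeg_add [simp]: "mdeg (\<alpha> + \<beta>) = mdeg \<alpha> + mdeg \<beta>"
proof -
  let ?S = "Poly_Mapping.keys \<alpha> \<union> Poly_Mapping.keys \<beta>"
  have "mdeg (\<alpha> + \<beta>) = (\<Sum>i\<in>?S. Poly_Mapping.lookup (\<alpha> + \<beta>) i)"
    by (rule mdeg_eq_sum) (auto dest: set_mp[OF keys_add])
  also have "\<dots> = mdeg \<alpha> + mdeg \<beta>"
    by (simp add: lookup_add sum.distrib mdeg_eq_sum[of ?S])
  finally show ?thesis .
qed

lemma mdeg_single [simp]: "mdeg (Poly_Mapping.single t n) = n"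
  by (simp add: mdeg_def)

lemma mdeg_eq_0_iff [simp]: "mdeg \<alpha> = 0 \<longleftrightarrow> \<alpha> = 0"
  by (auto simp: mdeg_def in_keys_iff intro!: poly_mapping_eqI)

lemma keys_add_monom [simp]: "Poly_Mapping.keys ((\<alpha>::monom) + \<beta>) = Poly_Mapping.keys \<alpha> \<union> Poly_Mapping.keys \<beta>"
  by (auto simp: in_keys_iff lookup_add)

lemma monom_split_var:
  assumes "t \<in> Poly_Mapping.keys (\<alpha>::monom)"
  obtains \<beta> where "\<alpha> = \<beta> + Poly_Mapping.single t 1"
proof
  show "\<alpha> = (\<alpha> - Poly_Mapping.single t 1) + Poly_Mapping.single t 1"
    using assms by (intro poly_mapping_eqI) (auto simp: lookup_add lookup_minus lookup_single when_def in_keys_iff)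
qed

lemma monom_split_deg:
  assumes "mdeg (\<gamma>::monom) \<le> a + b"
  obtains \<gamma>1 \<gamma>2 where "\<gamma> = \<gamma>1 + \<gamma>2" "mdeg \<gamma>1 \<le> a" "mdeg \<gamma>2 \<le> b"
  using assms
proof (induction "mdeg \<gamma>" arbitrary: \<gamma> a b thesis)
  case 0
  then show ?case by (metis add_0 mdeg_eq_0_iff zero_le)
next
  case (Suc x)
  then have "\<gamma> \<noteq> 0" by auto
  then obtain t where "t \<in> Poly_Mapping.keys \<gamma>" by (metis keys_eq_empty all_not_in_conv)
  then obtain \<gamma>' where \<gamma>: "\<gamma> = \<gamma>' + Poly_Mapping.single t 1" by (rule monom_split_var)
  have deg: "mdeg \<gamma>' = x" using Suc.hyps(2) \<gamma> by simp
  show ?case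
  proof (cases a)
    case 0
    then obtain b' where "b = Suc b'" using Suc.prems(2) Suc.hyps(2) by (cases b) auto
    then obtain \<gamma>1 \<gamma>2 where "\<gamma>' = \<gamma>1 + \<gamma>2" "mdeg \<gamma>1 \<le> a" "mdeg \<gamma>2 \<le> b'"
      using Suc.hyps(1)[OF deg[symmetric], of a b'] Suc.prems(2) Suc.hyps(2) \<gamma> by auto
    then show ?thesis
      using Suc.prems(1)[of \<gamma>1 "\<gamma>2 + Poly_Mapping.single t 1"] \<gamma> \<open>b = Suc b'\<close> by (simp add: add.assoc)
  next
    case (Suc a')
    obtain \<gamma>1 \<gamma>2 where "\<gamma>' = \<gamma>1 + \<gamma>2" "mdeg \<gamma>1 \<le> a'" "mdeg \<gamma>2 \<le> b"
      using Suc.hyps(1)[OF deg[symmetric], of a' b] Suc.prems(2) Suc.hyps(2) \<gamma> \<open>a = Suc a'\<close> by auto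
    then show ?thesis
      using Suc.prems(1)[of "\<gamma>1 + Poly_Mapping.single t 1" \<gamma>2] \<gamma> \<open>a = Suc a'\<close> by (simp add: ac_simps)
  qed
qed

lemma finite_mons:
  assumes "finite I" shows "finite (mons I d)"
proof -
  have "Poly_Mapping.lookup ` mons I d \<subseteq> {f. \<forall>x. (x \<in> I \<longrightarrow> f x \<in> {0..d}) \<and> (x \<notin> I \<longrightarrow> f x = 0)}"
  proof clarify
    fix \<alpha> x assume \<alpha>: "\<alpha> \<in> mons I d"
    have "Poly_Mapping.lookup \<alpha> x \<le> mdeg \<alpha>"
      by (cases "x \<in> Poly_Mapping.keys \<alpha>") (auto simp: mdeg_def in_keys_iff intro: member_le_sum)
    then show "(x \<in> I \<longrightarrow> Poly_Mapping.lookup \<alpha> x \<in> {0..d}) \<and> (x \<notin> I \<longrightarrow> Poly_Mapping.lookup \<alpha> x = 0)"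
      using \<alpha> by (auto simp: mons_def in_keys_iff)
  qed
  then have "finite (Poly_Mapping.lookup ` mons I d)"
    by (rule finite_subset) (intro finite_set_of_finite_funs assms, simp)
  then show ?thesis by (rule finite_imageD) (auto simp: inj_on_def)
qed

lemma zero_in_mons [simp]: "0 \<in> mons I d"
  by (simp add: mons_def)

lemma mons_mono: "d \<le> d' \<Longrightarrow> mons I d \<subseteq> mons I d'"
  by (auto simp: mons_def)

lemma poly_eq_sum_single: "(p::rpoly) = (\<Sum>\<gamma>\<in>Poly_Mapping.keys p. Poly_Mapping.single \<gamma> (Poly_Mapping.lookup p \<gamma>))"
  by (rule poly_mapping_eqI) (auto simp: lookup_sum lookup_single when_def in_keys_iff)

lemma single_sum: "Poly_Mapping.single k (\<Sum>i\<in>S. f i) = (\<Sum>i\<in>S. Poly_Mapping.single k (f i))"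
  by (induction S rule: infinite_finite_induct) (auto simp: single_add)

lemma mdeg_le_pdeg: "\<gamma> \<in> Poly_Mapping.keys q \<Longrightarrow> mdeg \<gamma> \<le> pdeg q"
  unfolding pdeg_def by (auto intro!: Max_ge)

lemma gram_cong: "(\<And>a b. a \<in> B \<Longrightarrow> b \<in> B \<Longrightarrow> G a b = G' a b) \<Longrightarrow> gram B G = gram B G'"
  unfolding gram_def by (intro sum.cong) auto

lemma gram_add: "gram B (\<lambda>a b. X a b + Y a b) = gram B X + gram B Y"
  unfolding gram_def by (simp add: single_add sum.distrib)

lemma gram_diff: "gram B (\<lambda>a b. X a b - Y a b) = gram B X - gram B Y"
  unfolding gram_def by (simp add: single_diff sum_subtractf)

lemma gram_scale: "gram B (\<lambda>a b. c * X a b) = const c * gram B X"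
  unfolding gram_def const_def by (simp add: sum_distrib_left mult_single)

lemma gram_diag_mat: "finite B \<Longrightarrow> gram B (diag_mat s) = (\<Sum>a\<in>B. Poly_Mapping.single (a + a) (s a))"
  unfolding gram_def diag_mat_def by (simp add: if_distrib[of "Poly_Mapping.single _"] cong: if_cong)

lemma gram_single_entry:
  assumes "finite B" "\<alpha> \<in> B" "\<beta> \<in> B"
  shows "gram B (\<lambda>a b. if a = \<alpha> \<and> b = \<beta> then v else 0) = Poly_Mapping.single (\<alpha> + \<beta>) v"
proof -
  have "(\<Sum>b\<in>B. Poly_Mapping.single (a + b) (if a = \<alpha> \<and> b = \<beta> then v else 0))
      = (if a = \<alpha> then Poly_Mapping.single (\<alpha> + \<beta>) v else 0)" for a
    using assms by (cases "a = \<alpha>") (simp_all add: if_distrib[of "Poly_Mapping.single _"] cong: if_cong)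
  then show ?thesis using assms by (simp add: gram_def)
qed

lemma sum_single_double_reindex:
  assumes "finite B" "\<forall>\<beta>\<in>B1. f \<beta> \<in> B"
  shows "(\<Sum>\<alpha>\<in>B. Poly_Mapping.single (\<alpha> + \<alpha>) (\<Sum>\<beta>\<in>B1. if f \<beta> = \<alpha> then w \<beta> else 0))
       = (\<Sum>\<beta>\<in>B1. Poly_Mapping.single (f \<beta> + f \<beta>) (w \<beta>))"
proof -
  have "(\<Sum>\<alpha>\<in>B. Poly_Mapping.single (\<alpha> + \<alpha>) (\<Sum>\<beta>\<in>B1. if f \<beta> = \<alpha> then w \<beta> else 0))
      = (\<Sum>\<beta>\<in>B1. \<Sum>\<alpha>\<in>B. if f \<beta> = \<alpha> then Poly_Mapping.single (f \<beta> + f \<beta>) (w \<beta>) else 0)"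
    by (subst sum.swap) (auto simp: single_sum intro!: sum.cong)
  also have "\<dots> = (\<Sum>\<beta>\<in>B1. Poly_Mapping.single (f \<beta> + f \<beta>) (w \<beta>))"
    using assms by (intro sum.cong refl) simp
  finally show ?thesis .
qed

definition gram_representable :: "monom set \<Rightarrow> rpoly \<Rightarrow> bool" where
  "gram_representable B q \<longleftrightarrow> (\<exists>E. (\<forall>a b. E a b = E b a) \<and> gram B E = q)"

lemma gram_representable_zero: "gram_representable B 0"
  unfolding gram_representable_def by (intro exI[of _ "\<lambda>a b. 0"]) (simp add: gram_def)

lemma gram_representable_add:
  assumes "gram_representable B p" "gram_representable B q"
  shows "gram_representable B (p + q)"
proof -
  obtain E1 E2 where "\<forall>a b. E1 a b = E1 b a" "gram B E1 = p" "\<forall>a b. E2 a b = E2 b a" "gram B E2 = q"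
    using assms unfolding gram_representable_def by blast
  then show ?thesis
    unfolding gram_representable_def by (intro exI[of _ "\<lambda>a b. E1 a b + E2 a b"]) (simp add: gram_add)
qed

lemma gram_representable_sum:
  "(\<And>i. i \<in> S \<Longrightarrow> gram_representable B (f i)) \<Longrightarrow> gram_representable B (\<Sum>i\<in>S. f i)"
  by (induction S rule: infinite_finite_induct) (auto intro: gram_representable_zero gram_representable_add)

lemma gram_representable_single:
  assumes "finite B" "\<alpha> \<in> B" "\<beta> \<in> B"
  shows "gram_representable B (Poly_Mapping.single (\<alpha> + \<beta>) v)"
proof -
  define e where "e a b = (if a = \<alpha> \<and> b = \<beta> then v/2 else 0)" for a b
  have e_swap: "(\<lambda>a b. e b a) = (\<lambda>a b. if a = \<beta> \<and> b = \<alpha> then v/2 else 0)"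
    by (intro ext) (simp add: e_def conj_commute)
  have "gram B (\<lambda>a b. e a b + e b a) = Poly_Mapping.single (\<alpha> + \<beta>) (v/2) + Poly_Mapping.single (\<beta> + \<alpha>) (v/2)"
    unfolding gram_add e_swap using assms by (simp add: e_def gram_single_entry)
  also have "\<dots> = Poly_Mapping.single (\<alpha> + \<beta>) v"
    by (simp add: add.commute[of \<beta>] single_add[symmetric])
  finally show ?thesis
    unfolding gram_representable_def by (intro exI[of _ "\<lambda>a b. e a b + e b a"]) (simp add: add.commute)
qed

lemma gram_representable_localizing:
  assumes fin: "finite I" and deg: "hdeg q \<le> k" and vars: "in_vars I q"
  shows "gram_representable (mons I k) (q * gram (mons I (k - hdeg q)) (diag_mat (\<lambda>_. 1)))"
proof -
  let ?B = "mons I (k - hdeg q)"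
  have "q * gram ?B (diag_mat (\<lambda>_. 1)) = (\<Sum>\<gamma>\<in>Poly_Mapping.keys q. Poly_Mapping.single \<gamma> (Poly_Mapping.lookup q \<gamma>))
      * (\<Sum>\<beta>\<in>?B. Poly_Mapping.single (\<beta> + \<beta>) 1)"
    by (simp only: gram_diag_mat[OF finite_mons[OF fin]] poly_eq_sum_single[of q, symmetric])
  also have "\<dots> = (\<Sum>\<gamma>\<in>Poly_Mapping.keys q. \<Sum>\<beta>\<in>?B. Poly_Mapping.single (\<gamma> + (\<beta> + \<beta>)) (Poly_Mapping.lookup q \<gamma>))"
    by (simp only: sum_distrib_left sum_distrib_right mult_single mult_1_right) (rule sum.swap)
  also have "gram_representable (mons I k) \<dots>"
  proof (intro gram_representable_sum)
    fix \<gamma> \<beta> assume \<gamma>: "\<gamma> \<in> Poly_Mapping.keys q" and \<beta>: "\<beta> \<in> ?B"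
    have "mdeg \<gamma> \<le> hdeg q + hdeg q" using mdeg_le_pdeg[OF \<gamma>] by (simp add: hdeg_def)
    then obtain \<gamma>1 \<gamma>2 where \<gamma>12: "\<gamma> = \<gamma>1 + \<gamma>2" "mdeg \<gamma>1 \<le> hdeg q" "mdeg \<gamma>2 \<le> hdeg q"
      by (rule monom_split_deg)
    have "Poly_Mapping.keys \<gamma> \<subseteq> I" using vars \<gamma> by (auto simp: in_vars_def)
    then have "\<gamma>1 + \<beta> \<in> mons I k" "\<gamma>2 + \<beta> \<in> mons I k"
      using \<gamma>12 \<beta> deg by (auto simp: mons_def)
    from gram_representable_single[OF finite_mons[OF fin] this]
    show "gram_representable (mons I k) (Poly_Mapping.single (\<gamma> + (\<beta> + \<beta>)) (Poly_Mapping.lookup q \<gamma>))"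
      using \<gamma>12 by (simp add: ac_simps)
  qed
  finally show ?thesis .
qed

definition riesz :: "(monom \<Rightarrow> real) \<Rightarrow> rpoly \<Rightarrow> real" where
  "riesz y p = (\<Sum>\<gamma>\<in>Poly_Mapping.keys p. Poly_Mapping.lookup p \<gamma> * y \<gamma>)"

lemma riesz_add: "riesz y (p + q) = riesz y p + riesz y q"
  unfolding riesz_def by (rule setsum_keys_plus_distrib) (simp_all add: distrib_right)

lemma riesz_zero: "riesz y 0 = 0"
  by (simp add: riesz_def)

lemma riesz_sum: "riesz y (\<Sum>i\<in>S. p i) = (\<Sum>i\<in>S. riesz y (p i))"
  by (induction S rule: infinite_finite_induct) (simp_all add: riesz_add riesz_zero)

lemma riesz_single [simp]: "riesz y (Poly_Mapping.single \<gamma> v) = v * y \<gamma>"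
  by (simp add: riesz_def)

lemma riesz_const [simp]: "riesz y (const c) = c * y 0"
  by (simp add: const_def)

lemma riesz_mult_gram:
  assumes "finite B"
  shows "riesz y (q * gram B G) = (\<Sum>b\<in>B. \<Sum>c\<in>B. G b c * locmat q y b c)"
proof -
  let ?K = "Poly_Mapping.keys q" and ?q = "Poly_Mapping.lookup q"
  have "q * gram B G = (\<Sum>\<gamma>\<in>?K. Poly_Mapping.single \<gamma> (?q \<gamma>)) * gram B G"
    by (subst poly_eq_sum_single[of q]) simp
  also have "\<dots> = (\<Sum>\<gamma>\<in>?K. \<Sum>b\<in>B. \<Sum>c\<in>B. Poly_Mapping.single (\<gamma> + (b + c)) (?q \<gamma> * G b c))"
    unfolding gram_def sum_distrib_right by (simp only: sum_distrib_left mult_single)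
  finally have "riesz y (q * gram B G) = (\<Sum>\<gamma>\<in>?K. \<Sum>b\<in>B. \<Sum>c\<in>B. ?q \<gamma> * G b c * y (\<gamma> + (b + c)))"
    by (simp add: riesz_sum)
  also have "\<dots> = (\<Sum>b\<in>B. \<Sum>\<gamma>\<in>?K. \<Sum>c\<in>B. ?q \<gamma> * G b c * y (\<gamma> + (b + c)))"
    by (rule sum.swap)
  also have "\<dots> = (\<Sum>b\<in>B. \<Sum>c\<in>B. \<Sum>\<gamma>\<in>?K. ?q \<gamma> * G b c * y (\<gamma> + (b + c)))"
    by (intro sum.cong refl sum.swap)
  also have "\<dots> = (\<Sum>b\<in>B. \<Sum>c\<in>B. G b c * locmat q y b c)"
    unfolding locmat_def by (simp add: sum_distrib_left add.commute mult_ac)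
  finally show ?thesis .
qed

lemma trPMP_eq_sum_mat_mult_self:
  assumes sym: "\<forall>a\<in>B. \<forall>b\<in>B. P a b = P b a"
  shows "trPMP B P M = (\<Sum>b\<in>B. \<Sum>c\<in>B. mat_mult B P P b c * M b c)"
proof -
  have "(\<Sum>b\<in>B. \<Sum>c\<in>B. mat_mult B P P b c * M b c) = (\<Sum>b\<in>B. \<Sum>c\<in>B. \<Sum>a\<in>B. P b a * P a c * M b c)"
    by (simp add: mat_mult_def sum_distrib_right)
  also have "\<dots> = (\<Sum>b\<in>B. \<Sum>a\<in>B. \<Sum>c\<in>B. P b a * P a c * M b c)"
    by (intro sum.cong refl sum.swap)
  also have "\<dots> = (\<Sum>a\<in>B. \<Sum>b\<in>B. \<Sum>c\<in>B. P b a * P a c * M b c)"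
    by (rule sum.swap)
  also have "\<dots> = trPMP B P M"
    unfolding trPMP_def using sym by (intro sum.cong refl) (simp add: mult_ac)
  finally show ?thesis by simp
qed

lemma trPMP_locmat_eq_riesz:
  assumes "finite B" "\<forall>a\<in>B. \<forall>b\<in>B. P a b = P b a"
  shows "trPMP B P (locmat q y) = riesz y (q * gram B (mat_mult B P P))"
  using assms by (simp add: riesz_mult_gram trPMP_eq_sum_mat_mult_self)

section \<open>The ball constraint\<close>

definition ball_poly :: "real \<Rightarrow> nat set \<Rightarrow> rpoly" where
  "ball_poly R I = const R - (\<Sum>t\<in>I. (var t)\<^sup>2)"

lemma single_one_double: "Poly_Mapping.single t (1::nat) + Poly_Mapping.single t 1 = Poly_Mapping.single t 2"
  by (simp only: single_add[symmetric] one_add_one)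

lemma single_two_eq_iff: "Poly_Mapping.single s (2::nat) = Poly_Mapping.single t 2 \<longleftrightarrow> s = t"
  by (metis lookup_single_eq lookup_single_not_eq zero_neq_numeral)

lemma single_two_nonzero: "Poly_Mapping.single t (2::nat) \<noteq> 0"
  by (metis lookup_single_eq lookup_zero zero_neq_numeral)

lemma var_squared: "(var t)\<^sup>2 = Poly_Mapping.single (Poly_Mapping.single t 2) 1"
  unfolding var_def power2_eq_square mult_single single_one_double by simp

lemma lookup_ball_poly_square:
  assumes "finite I" "t \<in> I"
  shows "Poly_Mapping.lookup (ball_poly R I) (Poly_Mapping.single t 2) = -1"
proof -
  have "Poly_Mapping.lookup (\<Sum>s\<in>I. (var s)\<^sup>2) (Poly_Mapping.single t 2) = (\<Sum>s\<in>I. if s = t then 1 else 0)"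
    by (simp add: lookup_sum var_squared lookup_single when_def single_two_eq_iff)
  also have "\<dots> = 1" using assms by simp
  finally show ?thesis
    using single_two_nonzero[of t] by (simp add: ball_poly_def lookup_minus const_def lookup_single when_def)
qed

lemma keys_ball_poly: "Poly_Mapping.keys (ball_poly R I) \<subseteq> insert 0 ((\<lambda>t. Poly_Mapping.single t 2) ` I)"
proof -
  have "Poly_Mapping.keys (\<Sum>s\<in>I. (var s)\<^sup>2) \<subseteq> (\<Union>s\<in>I. Poly_Mapping.keys ((var s)\<^sup>2))" by (rule keys_sum)
  also have "\<dots> \<subseteq> (\<lambda>t. Poly_Mapping.single t 2) ` I" by (auto simp: var_squared)
  finally show ?thesis
    using keys_diff[of "const R" "\<Sum>s\<in>I. (var s)\<^sup>2"] by (auto simp: ball_poly_def const_def split: if_splits)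
qed

lemma hdeg_ball_poly:
  assumes "finite I" "I \<noteq> {}" shows "hdeg (ball_poly R I) = 1"
proof -
  obtain t where "t \<in> I" using assms by auto
  then have t: "Poly_Mapping.single t 2 \<in> Poly_Mapping.keys (ball_poly R I)"
    using lookup_ball_poly_square[OF assms(1)] by (simp add: in_keys_iff)
  have "Max (mdeg ` Poly_Mapping.keys (ball_poly R I)) = 2"
  proof (rule Max_eqI)
    show "2 \<in> mdeg ` Poly_Mapping.keys (ball_poly R I)" using t by (metis image_eqI mdeg_single)
  qed (use keys_ball_poly[of R I] in auto)
  then show ?thesis using t by (auto simp: hdeg_def pdeg_def)
qed

lemma in_vars_ball_poly_imp_subset:
  assumes "finite I" "in_vars I' (ball_poly R I)" shows "I \<subseteq> I'"
proof
  fix t assume "t \<in> I"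
  then have "Poly_Mapping.single t 2 \<in> Poly_Mapping.keys (ball_poly R I)"
    using lookup_ball_poly_square[OF assms(1)] by (simp add: in_keys_iff)
  then show "t \<in> I'" using assms(2) by (auto simp: in_vars_def)
qed

definition ball_diag :: "nat set \<Rightarrow> monom set \<Rightarrow> real \<Rightarrow> real \<Rightarrow> (monom \<Rightarrow> real) \<Rightarrow> monom \<Rightarrow> real" where
  "ball_diag I B1 R c w \<alpha> = (if \<alpha> = 0 then c else 0) - (\<Sum>\<beta>\<in>B1. if \<beta> = \<alpha> then R * w \<beta> else 0)
      + (\<Sum>t\<in>I. \<Sum>\<beta>\<in>B1. if \<beta> + Poly_Mapping.single t 1 = \<alpha> then w \<beta> else 0)"

definition ball_weight :: "real \<Rightarrow> real \<Rightarrow> monom \<Rightarrow> real" where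
  "ball_weight R c \<beta> = c / (2 * R) * (1 / (2 * R)) ^ mdeg \<beta>"

lemma ball_poly_diag_identity:
  assumes "finite B" "0 \<in> B" "B1 \<subseteq> B" and shift: "\<forall>\<beta>\<in>B1. \<forall>t\<in>I. \<beta> + Poly_Mapping.single t 1 \<in> B"
  shows "gram B (diag_mat (ball_diag I B1 R c w)) + ball_poly R I * gram B1 (diag_mat w) = const c"
proof -
  have fin1: "finite B1" using assms(1,3) by (rule finite_subset[rotated])
  define S where "S = (\<Sum>\<beta>\<in>B1. Poly_Mapping.single (\<beta> + \<beta>) (R * w \<beta>))"
  define T where "T = (\<Sum>t\<in>I. \<Sum>\<beta>\<in>B1. Poly_Mapping.single (Poly_Mapping.single t 2 + (\<beta> + \<beta>)) (w \<beta>))"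
  have "(\<Sum>\<alpha>\<in>B. Poly_Mapping.single (\<alpha> + \<alpha>) (if \<alpha> = 0 then c else 0)) = const c"
    using assms(1,2) by (simp add: const_def if_distrib[of "Poly_Mapping.single _"] cong: if_cong)
  moreover have "(\<Sum>\<alpha>\<in>B. Poly_Mapping.single (\<alpha> + \<alpha>) (\<Sum>\<beta>\<in>B1. if \<beta> = \<alpha> then R * w \<beta> else 0)) = S"
    unfolding S_def using assms(3) by (intro sum_single_double_reindex[OF assms(1), of B1 "\<lambda>\<beta>. \<beta>"]) auto
  moreover have "(\<Sum>\<alpha>\<in>B. Poly_Mapping.single (\<alpha> + \<alpha>)
      (\<Sum>t\<in>I. \<Sum>\<beta>\<in>B1. if \<beta> + Poly_Mapping.single t 1 = \<alpha> then w \<beta> else 0)) = T"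
  proof -
    have "(\<Sum>\<alpha>\<in>B. Poly_Mapping.single (\<alpha> + \<alpha>)
        (\<Sum>t\<in>I. \<Sum>\<beta>\<in>B1. if \<beta> + Poly_Mapping.single t 1 = \<alpha> then w \<beta> else 0))
      = (\<Sum>t\<in>I. \<Sum>\<alpha>\<in>B. Poly_Mapping.single (\<alpha> + \<alpha>)
        (\<Sum>\<beta>\<in>B1. if \<beta> + Poly_Mapping.single t 1 = \<alpha> then w \<beta> else 0))"
      by (simp only: single_sum) (rule sum.swap)
    also have "\<dots> = (\<Sum>t\<in>I. \<Sum>\<beta>\<in>B1. Poly_Mapping.single
        ((\<beta> + Poly_Mapping.single t 1) + (\<beta> + Poly_Mapping.single t 1)) (w \<beta>))"
      using shift by (intro sum.cong refl sum_single_double_reindex[OF assms(1)]) auto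
    also have "\<dots> = T"
      unfolding T_def
      by (intro sum.cong refl) (simp add: ac_simps flip: single_one_double)
    finally show ?thesis .
  qed
  ultimately have "gram B (diag_mat (ball_diag I B1 R c w)) = const c - S + T"
    unfolding gram_diag_mat[OF assms(1)] ball_diag_def
    by (simp only: single_add single_diff sum.distrib sum_subtractf)
  moreover have "ball_poly R I * gram B1 (diag_mat w) = S - T"
    unfolding ball_poly_def gram_diag_mat[OF fin1] S_def T_def const_def var_squared
    by (simp only: left_diff_distrib sum_distrib_left sum_distrib_right mult_single add_0 mult_1)
       (simp add: sum_subtractf, rule sum.swap)
  ultimately show ?thesis by simp
qed

lemma add_single_in_mons_iff:
  assumes "finite I" "t \<in> I" "hdeg (ball_poly R I) \<le> k"
  shows "\<beta> + Poly_Mapping.single t 1 \<in> mons I k \<longleftrightarrow> \<beta> \<in> mons I (k - hdeg (ball_poly R I))"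
proof -
  have "hdeg (ball_poly R I) = 1" using assms(1,2) by (intro hdeg_ball_poly) auto
  then show ?thesis using assms(2,3) by (auto simp: mons_def)
qed

text \<open>Since \<open>R * ball_weight R c (\<beta> + e\<^sub>t) = ball_weight R c \<beta> / 2\<close>, the negative entry
  \<open>- R * w \<alpha>\<close> at \<open>\<alpha> = \<beta> + e\<^sub>t\<close> is outweighed by the shifted entry \<open>w \<beta>\<close>.\<close>
lemma ball_diag_pos:
  assumes fin: "finite I" and R: "R > 0" and c: "c > 0" and k: "hdeg (ball_poly R I) \<le> k"
    and \<alpha>: "\<alpha> \<in> mons I k"
  shows "ball_diag I (mons I (k - hdeg (ball_poly R I))) R c (ball_weight R c) \<alpha> > 0"
proof -
  let ?B1 = "mons I (k - hdeg (ball_poly R I))" and ?w = "ball_weight R c"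
  let ?shifts = "\<Sum>t\<in>I. \<Sum>\<beta>\<in>?B1. if \<beta> + Poly_Mapping.single t 1 = \<alpha> then ?w \<beta> else 0"
  have w_pos: "?w \<beta> > 0" for \<beta> using R c by (simp add: ball_weight_def)
  have shifts_nonneg: "?shifts \<ge> 0" using w_pos by (intro sum_nonneg) (auto intro: less_imp_le)
  have diag_le: "(\<Sum>\<beta>\<in>?B1. if \<beta> = \<alpha> then R * ?w \<beta> else 0) \<le> R * ?w \<alpha>"
    using fin R w_pos[of \<alpha>] by (simp add: finite_mons)
  show ?thesis
  proof (cases "\<alpha> = 0")
    case True
    then have "R * ?w \<alpha> = c / 2" using R by (simp add: ball_weight_def)
    then show ?thesis using True shifts_nonneg diag_le c by (simp add: ball_diag_def)
  next
    case False
    then obtain t where t: "t \<in> Poly_Mapping.keys \<alpha>" by (metis keys_eq_empty all_not_in_conv)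
    then obtain \<beta> where \<alpha>_eq: "\<alpha> = \<beta> + Poly_Mapping.single t 1" by (rule monom_split_var)
    have "t \<in> I" using t \<alpha> by (auto simp: mons_def)
    then have "\<beta> \<in> ?B1" using add_single_in_mons_iff[OF fin _ k] \<alpha> \<alpha>_eq by blast
    have "?w \<beta> \<le> (\<Sum>\<beta>'\<in>?B1. if \<beta>' + Poly_Mapping.single t 1 = \<alpha> then ?w \<beta>' else 0)"
      using member_le_sum[OF \<open>\<beta> \<in> ?B1\<close>, of "\<lambda>\<beta>'. if \<beta>' + Poly_Mapping.single t 1 = \<alpha> then ?w \<beta>' else 0"]
        \<alpha>_eq w_pos fin by (auto simp: finite_mons less_imp_le)
    also have "\<dots> \<le> ?shifts"
      using \<open>t \<in> I\<close> fin w_pos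
      by (intro member_le_sum[where f="\<lambda>t. \<Sum>\<beta>\<in>?B1. if \<beta> + Poly_Mapping.single t 1 = \<alpha> then ?w \<beta> else 0"])
         (auto intro!: sum_nonneg simp: less_imp_le)
    finally have "?w \<beta> \<le> ?shifts" .
    moreover have "R * ?w \<alpha> = ?w \<beta> / 2" using \<alpha>_eq R by (simp add: ball_weight_def field_simps)
    ultimately show ?thesis using False diag_le w_pos[of \<beta>] by (simp add: ball_diag_def)
  qed
qed

lemma ball_poly_certificate:
  assumes fin: "finite I" and R: "R > 0" and c: "c > 0" and k: "hdeg (ball_poly R I) \<le> k"
  shows "\<exists>d w. (\<forall>\<alpha>\<in>mons I k. d \<alpha> > 0) \<and> (\<forall>\<beta>. w \<beta> > 0) \<and>
    gram (mons I k) (diag_mat d) + ball_poly R I * gram (mons I (k - hdeg (ball_poly R I))) (diag_mat w) = const c"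
proof (intro exI conjI)
  show "\<forall>\<alpha>\<in>mons I k. ball_diag I (mons I (k - hdeg (ball_poly R I))) R c (ball_weight R c) \<alpha> > 0"
    using ball_diag_pos[OF assms] by blast
  show "\<forall>\<beta>. ball_weight R c \<beta> > 0" using R c by (simp add: ball_weight_def)
  show "gram (mons I k) (diag_mat (ball_diag I (mons I (k - hdeg (ball_poly R I))) R c (ball_weight R c)))
      + ball_poly R I * gram (mons I (k - hdeg (ball_poly R I))) (diag_mat (ball_weight R c)) = const c"
    using add_single_in_mons_iff[OF fin _ k]
    by (intro ball_poly_diag_identity[OF finite_mons[OF fin]] mons_mono) auto
qed

section \<open>Representations of positive constants\<close>

text \<open>Gram matrices of the form \<open>P * P\<close> with \<open>P\<close> positive definite are what the constant trace
  property needs: by \<open>trPMP_locmat_eq_riesz\<close> the trace is then the Riesz functional of the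
  represented polynomial.\<close>

definition posdef_sqrt_rep :: "nat \<Rightarrow> nat set \<Rightarrow> (nat \<Rightarrow> rpoly) \<Rightarrow> nat set \<Rightarrow> rpoly \<Rightarrow> bool" where
  "posdef_sqrt_rep k I g J q \<longleftrightarrow> (\<exists>G0 G. has_posdef_sqrt (mons I k) G0 \<and>
     (\<forall>i\<in>J. has_posdef_sqrt (mons I (k - hdeg (g i))) (G i)) \<and>
     gram (mons I k) G0 + (\<Sum>i\<in>J. g i * gram (mons I (k - hdeg (g i))) (G i)) = q)"

lemma posdef_sqrt_rep_const:
  fixes g :: "nat \<Rightarrow> rpoly"
  assumes fin: "finite I" "finite J" and i0: "i0 \<in> J" and R: "R > 0" and c: "c > 0"
    and ball: "g i0 = ball_poly R I"
    and deg: "\<forall>i\<in>J. hdeg (g i) \<le> k" and vars: "\<forall>i\<in>J. in_vars I (g i)"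
  shows "posdef_sqrt_rep k I g J (const c)"
proof -
  let ?B = "mons I k" and ?Bi = "\<lambda>i. mons I (k - hdeg (g i))"
  have fin_B: "finite ?B" "\<And>i. finite (?Bi i)" using fin by (simp_all add: finite_mons)
  have "hdeg (ball_poly R I) \<le> k" using deg i0 ball by metis
  then obtain d w where d: "\<forall>\<alpha>\<in>?B. d \<alpha> > 0" and w: "\<forall>\<beta>. w \<beta> > 0"
    and ball_id: "gram ?B (diag_mat d) + g i0 * gram (?Bi i0) (diag_mat w) = const c"
    using ball_poly_certificate[OF fin(1) R c] unfolding ball by blast
  define Q where "Q = (\<Sum>i\<in>J - {i0}. g i * gram (?Bi i) (diag_mat (\<lambda>_. 1)))"
  have "gram_representable ?B Q"
    unfolding Q_def using fin deg vars by (intro gram_representable_sum gram_representable_localizing) auto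
  then obtain E where E_sym: "\<forall>a b. E a b = E b a" and E: "gram ?B E = Q"
    by (auto simp: gram_representable_def)
  obtain m where m: "m > 0" "\<forall>\<alpha>\<in>?B. d \<alpha> \<ge> m" using finite_pos_lower_bound[OF fin_B(1) d] .
  obtain \<delta> where \<delta>: "\<delta> > 0" "mat_norm1 ?B (\<lambda>a b. \<delta> * E a b) \<le> m / 2"
    using small_multiple_mat_norm1[of "m / 2"] m by auto
  define G0 where "G0 = (\<lambda>a b. diag_mat d a b - \<delta> * E a b)"
  define G where "G i = (if i = i0 then diag_mat w else diag_mat (\<lambda>_. \<delta>))" for i
  have "has_posdef_sqrt ?B G0"
    unfolding G0_def using E_sym \<delta> by (intro has_posdef_sqrt_diag_minus_small[OF fin_B(1) m]) auto
  moreover have "\<forall>i\<in>J. has_posdef_sqrt (?Bi i) (G i)"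
    using fin_B w \<delta> by (auto simp: G_def intro: has_posdef_sqrt_diag_mat)
  moreover have "gram ?B G0 + (\<Sum>i\<in>J. g i * gram (?Bi i) (G i)) = const c"
  proof -
    have scale: "diag_mat (\<lambda>_. \<delta>) = (\<lambda>a b. \<delta> * diag_mat (\<lambda>_. 1) a b)"
      by (intro ext) (simp add: diag_mat_def)
    have "gram (?Bi i) (diag_mat (\<lambda>_. \<delta>)) = const \<delta> * gram (?Bi i) (diag_mat (\<lambda>_. 1))" for i
      by (subst scale) (rule gram_scale)
    then have "(\<Sum>i\<in>J. g i * gram (?Bi i) (G i)) = g i0 * gram (?Bi i0) (diag_mat w) + const \<delta> * Q"
      using fin(2) i0 by (simp add: sum.remove G_def Q_def sum_distrib_left mult_ac)
    moreover have "gram ?B G0 = gram ?B (diag_mat d) - const \<delta> * Q"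
      by (simp add: G0_def gram_diff gram_scale E)
    ultimately show ?thesis unfolding ball_id[symmetric] by simp
  qed
  ultimately show ?thesis unfolding posdef_sqrt_rep_def by blast
qed

lemma const_in_Qcirc_if_posdef_sqrt_rep:
  assumes "finite I" "posdef_sqrt_rep k I g J (const c)"
  shows "const c \<in> Qcirc k I g J"
proof -
  obtain G0 G where "has_posdef_sqrt (mons I k) G0" "\<forall>i\<in>J. has_posdef_sqrt (mons I (k - hdeg (g i))) (G i)"
    "gram (mons I k) G0 + (\<Sum>i\<in>J. g i * gram (mons I (k - hdeg (g i))) (G i)) = const c"
    using assms(2) by (auto simp: posdef_sqrt_rep_def)
  then show ?thesis
    unfolding Qcirc_def using assms(1)
    by (intro CollectI exI[of _ G0] exI[of _ G]) (auto intro: has_posdef_sqrt_imp_posdef finite_mons)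
qed

lemma constant_trace_if_posdef_sqrt_rep:
  assumes fin: "finite I" and rep: "posdef_sqrt_rep k I g J (const a)"
  shows "\<exists>P0 P. posdef (mons I k) P0 \<and> (\<forall>i\<in>J. posdef (mons I (k - hdeg (g i))) (P i)) \<and>
    (\<forall>y. y 0 = 1 \<longrightarrow> trPMP (mons I k) P0 (locmat 1 y)
       + (\<Sum>i\<in>J. trPMP (mons I (k - hdeg (g i))) (P i) (locmat (g i) y)) = a)"
proof -
  let ?Bi = "\<lambda>i. mons I (k - hdeg (g i))"
  obtain G0 G where G0: "has_posdef_sqrt (mons I k) G0" and G: "\<forall>i\<in>J. has_posdef_sqrt (?Bi i) (G i)"
    and id: "gram (mons I k) G0 + (\<Sum>i\<in>J. g i * gram (?Bi i) (G i)) = const a"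
    using rep by (auto simp: posdef_sqrt_rep_def)
  obtain P0 where P0: "posdef (mons I k) P0" "\<forall>a\<in>mons I k. \<forall>b\<in>mons I k. mat_mult (mons I k) P0 P0 a b = G0 a b"
    using G0 by (auto simp: has_posdef_sqrt_def)
  obtain P where P: "\<forall>i\<in>J. posdef (?Bi i) (P i) \<and> (\<forall>a\<in>?Bi i. \<forall>b\<in>?Bi i. mat_mult (?Bi i) (P i) (P i) a b = G i a b)"
    using G unfolding has_posdef_sqrt_def by metis
  have "trPMP (mons I k) P0 (locmat 1 y) + (\<Sum>i\<in>J. trPMP (?Bi i) (P i) (locmat (g i) y)) = riesz y (const a)" for y
  proof -
    have "trPMP (mons I k) P0 (locmat 1 y) = riesz y (gram (mons I k) G0)"
      using P0 fin by (simp add: trPMP_locmat_eq_riesz finite_mons posdef_def cong: gram_cong)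
    moreover have "trPMP (?Bi i) (P i) (locmat (g i) y) = riesz y (g i * gram (?Bi i) (G i))" if "i \<in> J" for i
      using P that fin by (simp add: trPMP_locmat_eq_riesz finite_mons posdef_def cong: gram_cong)
    ultimately show ?thesis by (simp add: id[symmetric] riesz_add riesz_sum)
  qed
  then show ?thesis using P0 P by (intro exI[of _ P0] exI[of _ P]) auto
qed

lemma CTP_cs_if_posdef_sqrt_rep:
  assumes "\<forall>j<p. finite (I j)" and "\<forall>k\<ge>kmin f m g l h. \<forall>j<p. posdef_sqrt_rep k (I j) g (J j) (const 1)"
  shows "CTP_cs f m g l h p I J W"
  unfolding CTP_cs_def
proof (intro allI impI)
  fix k j assume "kmin f m g l h \<le> k" "j < p"
  then have "finite (I j)" "posdef_sqrt_rep k (I j) g (J j) (const 1)" using assms by auto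
  from constant_trace_if_posdef_sqrt_rep[OF this] obtain P0 P
    where "posdef (mons (I j) k) P0" "\<forall>i\<in>J j. posdef (mons (I j) (k - hdeg (g i))) (P i)"
    "\<forall>y. y 0 = 1 \<longrightarrow> trPMP (mons (I j) k) P0 (locmat 1 y)
       + (\<Sum>i\<in>J j. trPMP (mons (I j) (k - hdeg (g i))) (P i) (locmat (g i) y)) = 1"
    by blast
  then show "\<exists>a>0. \<exists>P0 P. posdef (mons (I j) k) P0 \<and>
      (\<forall>i\<in>J j. posdef (mons (I j) (k - hdeg (g i))) (P i)) \<and>
      (\<forall>y. (\<forall>i\<in>W j. \<forall>\<alpha>\<in>mons (I j) (k - hdeg (h i)). \<forall>\<beta>\<in>mons (I j) (k - hdeg (h i)).
              locmat (h i) y \<alpha> \<beta> = 0) \<and> y 0 = 1 \<longrightarrow>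
         trPMP (mons (I j) k) P0 (locmat 1 y)
         + (\<Sum>i\<in>J j. trPMP (mons (I j) (k - hdeg (g i))) (P i) (locmat (g i) y)) = a)"
    by (intro exI[of _ "1::real"] conjI zero_less_one exI[of _ P0] exI[of _ P]) auto
qed

lemma hdeg_le_kmin: "i < m \<Longrightarrow> hdeg (g i) \<le> kmin f m g l h"
  unfolding kmin_def by (intro Max_ge) auto

lemma ball_constraint_in_own_clique:
  fixes i j p m :: nat and I J :: "nat \<Rightarrow> nat set" and g :: "nat \<Rightarrow> rpoly"
  assumes "j < p" "finite (I j)" "i < m" "g i = ball_poly R (I j)"
    and I_maximal: "\<forall>j<p. \<forall>j'<p. I j \<subseteq> I j' \<longrightarrow> j = j'"
    and J_cover: "(\<Union>j\<in>{0..<p}. J j) = {0..<m}"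
    and g_loc: "\<forall>j<p. \<forall>i\<in>J j. in_vars (I j) (g i)"
  shows "i \<in> J j"
proof -
  have "i \<in> (\<Union>j\<in>{0..<p}. J j)" using assms(3) J_cover by simp
  then obtain j' where j': "j' < p" "i \<in> J j'" by auto
  then have "in_vars (I j') (g i)" using g_loc by blast
  then have "I j \<subseteq> I j'" using in_vars_ball_poly_imp_subset[OF assms(2)] assms(4) by simp
  then show ?thesis using I_maximal assms(1) j' by blast
qed

theorem theorem3:
  fixes n m l p :: nat and f :: rpoly and g h :: "nat \<Rightarrow> rpoly"
    and I J W :: "nat \<Rightarrow> nat set"
  assumes f_vars: "in_vars {0..<n} f"
    and g_vars: "\<forall>i<m. in_vars {0..<n} (g i)"
    and h_vars: "\<forall>i<l. in_vars {0..<n} (h i)"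
    and I_sub: "\<forall>j<p. I j \<subseteq> {0..<n}"
    and I_maximal: "\<forall>j<p. \<forall>j'<p. I j \<subseteq> I j' \<longrightarrow> j = j'"
    and J_cover: "(\<Union>j\<in>{0..<p}. J j) = {0..<m}"
    and J_disj: "\<forall>j<p. \<forall>j'<p. j \<noteq> j' \<longrightarrow> J j \<inter> J j' = {}"
    and W_cover: "(\<Union>j\<in>{0..<p}. W j) = {0..<l}"
    and W_disj: "\<forall>j<p. \<forall>j'<p. j \<noteq> j' \<longrightarrow> W j \<inter> W j' = {}"
    and g_loc: "\<forall>j<p. \<forall>i\<in>J j. in_vars (I j) (g i)"
    and h_loc: "\<forall>j<p. \<forall>i\<in>W j. in_vars (I j) (h i)"
    and ball: "\<forall>j<p. \<exists>R>0. \<exists>i<m. g i = const R - (\<Sum>t\<in>I j. (var t)^2)"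
  shows "(\<forall>k\<ge>kmin f m g l h. \<forall>j<p. \<forall>c>0. const c \<in> Qcirc k (I j) g (J j))
         \<and> CTP_cs f m g l h p I J W"
proof -
  have fin: "finite (I j)" if "j < p" for j using I_sub that finite_subset by blast
  have rep: "posdef_sqrt_rep k (I j) g (J j) (const c)"
    if k: "kmin f m g l h \<le> k" and j: "j < p" and c: "c > 0" for k j c
  proof -
    obtain R i0 where R: "R > 0" and "i0 < m" and i0: "g i0 = ball_poly R (I j)"
      using ball j unfolding ball_poly_def by blast
    then have i0_J: "i0 \<in> J j"
      using ball_constraint_in_own_clique[of j p I i0 m g R J] j fin[OF j] I_maximal J_cover g_loc by blast
    have J_sub: "J j \<subseteq> {0..<m}" using J_cover j by auto
    then have deg: "\<forall>i\<in>J j. hdeg (g i) \<le> k" using k hdeg_le_kmin[of _ m g f l h] by force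
    have "finite (J j)" using J_sub finite_subset by blast
    with fin[OF j] i0_J R c i0 deg show ?thesis
      using g_loc j by (intro posdef_sqrt_rep_const) auto
  qed
  show ?thesis
  proof
    show "\<forall>k\<ge>kmin f m g l h. \<forall>j<p. \<forall>c>0. const c \<in> Qcirc k (I j) g (J j)"
      using fin rep by (blast intro: const_in_Qcirc_if_posdef_sqrt_rep)
    show "CTP_cs f m g l h p I J W"
      using fin rep[OF _ _ zero_less_one] by (intro CTP_cs_if_posdef_sqrt_rep) auto
  qed
qed

end
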